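(* Let $m\ge2$. For every $P_0\in\mathfrak P$ and every neighborhood $\mathcal O\subseteq\mathbb R^{nm\times n}$ of $P_0$ there exist $P_1,P_2\in\mathcal O\cap\mathfrak P$ such that $\operatorname{rank}[E-\gamma P_1,\ E-\gamma P_2]=2n-1$; equivalently, $$\operatorname{span}(E-\gamma P_1)\cap\operatorname{span}(E-\gamma P_2)=\operatorname{span}(\mathbf 1_{nm}).$$
   Context: $n,m\ge1$ integers, $\gamma\in(0,1)$. $\mathfrak P$ is the set of matrices $P\in\mathbb R^{nm\times n}$ with nonnegative entries and rows summing to one (rows indexed by state-action pairs ordered as $(s_1,a_1),\dots,(s_n,a_1),(s_1,a_2),\dots,(s_n,a_m)$). $E=[I_n,\dots,I_n]^\top\in\mathbb R^{nm\times n}$. $\operatorname{span}(B)$ denotes the column span of $B$; $\mathbf 1_{nm}$ is the all-ones vector. *)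

theory Defs
  imports "HOL-Analysis.Analysis"
begin

text \<open>States are the finite type 's (n = CARD('s)), actions the finite type 'a
  (m = CARD('a)). Matrices in R^{nm x n} are real^'s^('s \<times> 'a): rows are indexed by
  state-action pairs (s,a), columns by states.\<close>

definition stoch_mats :: "(real^'s::finite^('s \<times> 'a::finite)) set" where
  "stoch_mats = {P. (\<forall>i j. 0 \<le> P $ i $ j) \<and> (\<forall>i. (\<Sum>j\<in>UNIV. P $ i $ j) = 1)}"

text \<open>E = [I_n, ..., I_n]^T: row (s,a) is the s-th unit vector.\<close>
definition E_mat :: "real^'s::finite^('s \<times> 'a::finite)" where
  "E_mat = (\<chi> i j. if fst i = j then 1 else 0)"

definition hcat :: "real^'n^'m \<Rightarrow> real^'k^'m \<Rightarrow> real^('n + 'k)^'m" where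
  "hcat A B = (\<chi> i j. case j of Inl j' \<Rightarrow> A $ i $ j' | Inr j' \<Rightarrow> B $ i $ j')"

definition col_span :: "real^'n^'m \<Rightarrow> (real^'m) set" where
  "col_span A = span (columns A)"

end

theory Submission
  imports Defs
begin

text \<open>For stochastic P the map x \<mapsto> (E - \<gamma>P) x is injective, because a solution of
  z = \<gamma> P z restricted to the rows of one action is a fixpoint of a max-norm contraction; so
  both column spans have dimension n, and both contain 1 = (E - \<gamma>P) 1 / (1 - \<gamma>). Fix
  actions a1 \<noteq> a2 and move the a2-rows of P0 by the same small amount towards e_s (for P1)
  and towards a fixed e_s0 (for P2). If (E - \<gamma>P1) x = (E - \<gamma>P2) y, the a1-rows, on
  which P1 and P2 agree, force x = y, and then the a2-rows force x_s = x_s0 for all s. Hence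
  the spans meet in span 1, and Grassmann's formula gives the rank n + n - 1.\<close>

lemma E_mat_minus_mult_vec_nth:
  fixes P :: "real^'s::finite^('s \<times> 'a::finite)"
  shows "((E_mat - \<gamma> *\<^sub>R P) *v x) $ i = x $ fst i - \<gamma> * (\<Sum>j\<in>UNIV. P$i$j * x$j)"
proof -
  have "((E_mat - \<gamma> *\<^sub>R P) *v x) $ i
      = (\<Sum>j\<in>UNIV. (if fst i = j then 1 else 0) * x$j - \<gamma> * (P$i$j * x$j))"
    by (simp add: matrix_vector_mult_def E_mat_def algebra_simps)
  also have "\<dots> = x $ fst i - \<gamma> * (\<Sum>j\<in>UNIV. P$i$j * x$j)"
    by (simp add: sum_subtractf sum_distrib_left if_distrib[of "\<lambda>c. c * _"] cong: if_cong)
  finally show ?thesis .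
qed

lemma E_mat_minus_mult_vec_one:
  fixes P :: "real^'s::finite^('s \<times> 'a::finite)"
  assumes "P \<in> stoch_mats"
  shows "(E_mat - \<gamma> *\<^sub>R P) *v vec 1 = (1 - \<gamma>) *\<^sub>R vec 1"
  using assms unfolding stoch_mats_def by (simp add: vec_eq_iff E_mat_minus_mult_vec_nth)

lemma col_span_eq_range:
  fixes A :: "real^'n^'m"
  shows "col_span A = range ((*v) A)"
proof
  show "col_span A \<subseteq> range ((*v) A)"
    unfolding col_span_def
    by (rule span_minimal) (auto simp: columns_image_basis
        intro: linear_subspace_image[OF matrix_vector_mul_linear subspace_UNIV])
  show "range ((*v) A) \<subseteq> col_span A"
    unfolding col_span_def using matrix_vector_mult_in_columnspace by blast
qed

lemma columns_hcat: "columns (hcat A B) = columns A \<union> columns B"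
proof -
  have Inl: "column (Inl k) (hcat A B) = column k A" for k
    by (simp add: column_def hcat_def)
  have Inr: "column (Inr k) (hcat A B) = column k B" for k
    by (simp add: column_def hcat_def)
  show ?thesis
    unfolding columns_def
    by (auto simp: Inl[symmetric] Inr[symmetric]) (metis Inl Inr sum.exhaust)
qed

lemma rank_hcat:
  fixes A :: "real^'n^'m" and B :: "real^'k^'m"
  shows "rank (hcat A B) + dim (col_span A \<inter> col_span B) = dim (col_span A) + dim (col_span B)"
proof -
  have "rank (hcat A B) = dim {x + y |x y. x \<in> col_span A \<and> y \<in> col_span B}"
    unfolding column_rank_def columns_hcat col_span_def span_Un[symmetric] by (simp add: dim_span)
  then show ?thesis
    unfolding col_span_def by (simp add: dim_sums_Int subspace_span)
qed

lemma discounted_fixpoint_eq_zero: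
  fixes Q :: "real^'s::finite^('s \<times> 'a::finite)" and z :: "real^'s"
  assumes Q: "Q \<in> stoch_mats" and "0 \<le> \<gamma>" "\<gamma> < 1"
    and fixpoint: "\<And>s. z$s = \<gamma> * (\<Sum>j\<in>UNIV. Q$(s,a)$j * z$j)"
  shows "z = 0"
proof -
  define M where "M = Max (range (\<lambda>j. \<bar>z$j\<bar>))"
  obtain i where i: "\<bar>z$i\<bar> = M"
    unfolding M_def by (metis (mono_tags, lifting) Max_in UNIV_not_empty finite finite_imageI
        image_iff image_is_empty)
  have le: "\<bar>z$j\<bar> \<le> M" for j
    unfolding M_def by (simp add: Max_ge)
  have "\<bar>\<Sum>j\<in>UNIV. Q$(i,a)$j * z$j\<bar> \<le> (\<Sum>j\<in>UNIV. Q$(i,a)$j * M)"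
    using Q le unfolding stoch_mats_def
    by (intro order_trans[OF sum_abs] sum_mono) (simp add: abs_mult mult_left_mono)
  also have "\<dots> = M"
    using Q unfolding stoch_mats_def by (simp add: sum_distrib_right[symmetric])
  finally have "M \<le> \<gamma> * M"
    using fixpoint[of i] i \<open>0 \<le> \<gamma>\<close> by (metis abs_mult abs_of_nonneg mult_left_mono)
  with \<open>\<gamma> < 1\<close> le[of i] have "M = 0"
    by (smt (verit) mult_le_cancel_right1)
  then show ?thesis
    using le by (metis abs_le_zero_iff vec_eq_iff zero_index)
qed

lemma E_mat_minus_mult_vec_cancel:
  fixes P1 P2 :: "real^'s::finite^('s \<times> 'a::finite)"
  assumes P1: "P1 \<in> stoch_mats" and "0 \<le> \<gamma>" "\<gamma> < 1"
    and same_rows: "\<And>s. P1 $ (s,a) = P2 $ (s,a)"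
    and eq: "(E_mat - \<gamma> *\<^sub>R P1) *v x = (E_mat - \<gamma> *\<^sub>R P2) *v y"
  shows "x = y"
proof -
  have "x - y = 0"
  proof (rule discounted_fixpoint_eq_zero[OF P1 \<open>0 \<le> \<gamma>\<close> \<open>\<gamma> < 1\<close>, of _ a])
    fix s
    have "x$s - \<gamma> * (\<Sum>j\<in>UNIV. P1$(s,a)$j * x$j) = y$s - \<gamma> * (\<Sum>j\<in>UNIV. P1$(s,a)$j * y$j)"
      using arg_cong[OF eq, of "\<lambda>w. w $ (s,a)"]
      by (simp add: E_mat_minus_mult_vec_nth same_rows)
    then show "(x - y)$s = \<gamma> * (\<Sum>j\<in>UNIV. P1$(s,a)$j * (x - y)$j)"
      by (simp add: algebra_simps sum_subtractf)
  qed
  then show ?thesis by simp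
qed

lemma inj_E_mat_minus_mult:
  fixes P :: "real^'s::finite^('s \<times> 'a::finite)"
  assumes "P \<in> stoch_mats" and "0 \<le> \<gamma>" "\<gamma> < 1"
  shows "inj ((*v) (E_mat - \<gamma> *\<^sub>R P))"
proof (rule injI)
  fix x y assume "(E_mat - \<gamma> *\<^sub>R P) *v x = (E_mat - \<gamma> *\<^sub>R P) *v y"
  then show "x = y"
    by (rule E_mat_minus_mult_vec_cancel[OF assms, rotated]) simp
qed

lemma dim_col_span_E_mat_minus_mult:
  fixes P :: "real^'s::finite^('s \<times> 'a::finite)"
  assumes "P \<in> stoch_mats" and "0 \<le> \<gamma>" "\<gamma> < 1"
  shows "dim (col_span (E_mat - \<gamma> *\<^sub>R P)) = CARD('s)"
proof -
  have "dim (range ((*v) (E_mat - \<gamma> *\<^sub>R P))) = dim (UNIV :: (real^'s) set)"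
    using inj_E_mat_minus_mult[OF assms]
    by (intro dim_image_eq[OF matrix_vector_mul_linear]) (simp_all add: inj_on_def inj_def)
  then show ?thesis
    by (simp add: col_span_eq_range)
qed

lemma vec_one_in_col_span_E_mat_minus_mult:
  fixes P :: "real^'s::finite^('s \<times> 'a::finite)"
  assumes "P \<in> stoch_mats" and "\<gamma> < 1"
  shows "vec 1 \<in> col_span (E_mat - \<gamma> *\<^sub>R P)"
proof -
  have "vec 1 = (E_mat - \<gamma> *\<^sub>R P) *v ((1 / (1 - \<gamma>)) *\<^sub>R vec 1)"
    using assms E_mat_minus_mult_vec_one[OF assms(1)] by (simp add: matrix_vector_mult_scaleR)
  then show ?thesis
    unfolding col_span_eq_range by (metis rangeI)
qed

definition redirect ::
    "'a::finite \<Rightarrow> ('s \<Rightarrow> 's) \<Rightarrow> real^'s::finite^('s \<times> 'a) \<Rightarrow> real^'s^('s \<times> 'a)" where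
  "redirect a f P = (\<chi> i j. if snd i = a then (if j = f (fst i) then 1 else 0) else P$i$j)"

lemma redirect_in_stoch_mats:
  assumes "P \<in> stoch_mats"
  shows "redirect a f P \<in> stoch_mats"
proof -
  have "(\<Sum>j\<in>UNIV. P $ i $ j) = 1" for i
    using assms unfolding stoch_mats_def by blast
  then have "(\<Sum>j\<in>UNIV. redirect a f P $ i $ j) = 1" for i
    unfolding redirect_def by (cases "snd i = a") auto
  with assms show ?thesis
    unfolding stoch_mats_def by (auto simp: redirect_def)
qed

lemma redirect_mult_vec_row:
  "(\<Sum>j\<in>UNIV. redirect a f P $ (s,a) $ j * x$j) = x $ f s"
  by (simp add: redirect_def if_distrib[of "\<lambda>c. c * _"] cong: if_cong)

lemma stoch_mats_segment:
  fixes P R :: "real^'s::finite^('s \<times> 'a::finite)"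
  assumes P: "P \<in> stoch_mats" and R: "R \<in> stoch_mats" and "0 \<le> e" "e \<le> 1"
  shows "P + e *\<^sub>R (R - P) \<in> stoch_mats"
proof -
  have "P + e *\<^sub>R (R - P) = (1 - e) *\<^sub>R P + e *\<^sub>R R"
    by (simp add: algebra_simps)
  moreover have "(1 - e) *\<^sub>R P + e *\<^sub>R R \<in> stoch_mats"
    using P R \<open>0 \<le> e\<close> \<open>e \<le> 1\<close> unfolding stoch_mats_def
    by (simp add: sum.distrib sum_distrib_left[symmetric])
  ultimately show ?thesis by simp
qed

lemma segment_start_in_open:
  fixes P R :: "'v::real_normed_vector"
  assumes "open U" "P \<in> U"
  obtains d where "d > 0" "\<And>e. 0 \<le> e \<Longrightarrow> e \<le> d \<Longrightarrow> P + e *\<^sub>R (R - P) \<in> U"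
proof -
  obtain r where "r > 0" "ball P r \<subseteq> U"
    using assms open_contains_ball by blast
  define d where "d = r / (norm (R - P) + 1)"
  have "norm (R - P) + 1 > 0"
    by (smt (verit) norm_ge_zero)
  with \<open>r > 0\<close> have "d > 0"
    by (simp add: d_def)
  have "P + e *\<^sub>R (R - P) \<in> U" if "0 \<le> e" "e \<le> d" for e
  proof -
    have "e * norm (R - P) \<le> d * norm (R - P)"
      using that by (simp add: mult_right_mono)
    also have "\<dots> < d * (norm (R - P) + 1)"
      using \<open>d > 0\<close> by simp
    also have "\<dots> = r"
      using \<open>norm (R - P) + 1 > 0\<close> by (simp add: d_def)
    finally show ?thesis
      using \<open>ball P r \<subseteq> U\<close> that by (auto simp: dist_norm)
  qed
  with \<open>d > 0\<close> show ?thesis using that by blast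
qed

lemma col_span_inter_redirect_perturbations:
  fixes P0 :: "real^'s::finite^('s \<times> 'a::finite)" and a1 a2 :: 'a and s0 :: 's and e \<gamma> :: real
  defines "P1 \<equiv> P0 + e *\<^sub>R (redirect a2 id P0 - P0)"
      and "P2 \<equiv> P0 + e *\<^sub>R (redirect a2 (\<lambda>_. s0) P0 - P0)"
  assumes P0: "P0 \<in> stoch_mats" and "a1 \<noteq> a2" and "0 < e" "e \<le> 1" and "0 < \<gamma>" "\<gamma> < 1"
  shows "col_span (E_mat - \<gamma> *\<^sub>R P1) \<inter> col_span (E_mat - \<gamma> *\<^sub>R P2) = span {vec 1}"
proof
  have P1: "P1 \<in> stoch_mats" and P2: "P2 \<in> stoch_mats"
    unfolding P1_def P2_def using assms
    by (simp_all add: stoch_mats_segment redirect_in_stoch_mats)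
  show "span {vec 1} \<subseteq> col_span (E_mat - \<gamma> *\<^sub>R P1) \<inter> col_span (E_mat - \<gamma> *\<^sub>R P2)"
    using vec_one_in_col_span_E_mat_minus_mult[OF P1] vec_one_in_col_span_E_mat_minus_mult[OF P2]
      \<open>\<gamma> < 1\<close> unfolding col_span_def
    by (intro span_minimal subspace_inter subspace_span) auto
  show "col_span (E_mat - \<gamma> *\<^sub>R P1) \<inter> col_span (E_mat - \<gamma> *\<^sub>R P2) \<subseteq> span {vec 1}"
  proof
    fix v assume "v \<in> col_span (E_mat - \<gamma> *\<^sub>R P1) \<inter> col_span (E_mat - \<gamma> *\<^sub>R P2)"
    then obtain x y where vx: "v = (E_mat - \<gamma> *\<^sub>R P1) *v x" and vy: "v = (E_mat - \<gamma> *\<^sub>R P2) *v y"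
      unfolding col_span_eq_range by blast
    have same_rows: "P1 $ (s,a1) = P2 $ (s,a1)" for s
      using \<open>a1 \<noteq> a2\<close> by (simp add: P1_def P2_def redirect_def vec_eq_iff)
    have "x = y"
      by (rule E_mat_minus_mult_vec_cancel[OF P1 _ \<open>\<gamma> < 1\<close> same_rows])
        (use vx vy \<open>0 < \<gamma>\<close> in auto)
    have "x$s = x$s0" for s
    proof -
      have "(\<Sum>j\<in>UNIV. P1$(s,a2)$j * x$j) = (\<Sum>j\<in>UNIV. P2$(s,a2)$j * x$j)"
        using arg_cong[OF trans[OF vx[symmetric] vy], of "\<lambda>w. w $ (s,a2)"] \<open>x = y\<close> \<open>0 < \<gamma>\<close>
        by (simp add: E_mat_minus_mult_vec_nth)
      moreover have "(\<Sum>j\<in>UNIV. P1$(s,a2)$j * x$j) - (\<Sum>j\<in>UNIV. P2$(s,a2)$j * x$j)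
          = e * ((\<Sum>j\<in>UNIV. redirect a2 id P0 $ (s,a2) $ j * x$j)
                 - (\<Sum>j\<in>UNIV. redirect a2 (\<lambda>_. s0) P0 $ (s,a2) $ j * x$j))"
        by (simp add: P1_def P2_def algebra_simps sum_subtractf[symmetric] sum_distrib_left)
      ultimately have "e * x$s = e * x$s0"
        by (simp add: redirect_mult_vec_row)
      then show ?thesis using \<open>0 < e\<close> by simp
    qed
    then have "x = x$s0 *\<^sub>R vec 1"
      by (simp add: vec_eq_iff)
    then have "v = (x$s0 * (1 - \<gamma>)) *\<^sub>R vec 1"
      unfolding vx by (metis E_mat_minus_mult_vec_one[OF P1] matrix_vector_mult_scaleR scaleR_scaleR)
    then show "v \<in> span {vec 1}"
      by (simp add: span_base span_scale)
  qed
qed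

theorem mainTheorem16:
  fixes P0 :: "real^'s::finite^('s \<times> 'a::finite)"
    and N :: "(real^'s^('s \<times> 'a)) set"
    and \<gamma> :: real
  assumes "CARD('a) \<ge> 2"
    and "0 < \<gamma>" and "\<gamma> < 1"
    and "P0 \<in> stoch_mats"
    and "\<exists>U. open U \<and> P0 \<in> U \<and> U \<subseteq> N"
  shows "\<exists>P1 P2. P1 \<in> N \<inter> stoch_mats \<and> P2 \<in> N \<inter> stoch_mats \<and>
           rank (hcat (E_mat - \<gamma> *\<^sub>R P1) (E_mat - \<gamma> *\<^sub>R P2)) = 2 * CARD('s) - 1 \<and>
           col_span (E_mat - \<gamma> *\<^sub>R P1) \<inter> col_span (E_mat - \<gamma> *\<^sub>R P2)
             = span {vec 1}"
proof -
  obtain U where U: "open U" "P0 \<in> U" "U \<subseteq> N"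
    using assms(5) by blast
  obtain a1 a2 :: 'a where "a1 \<noteq> a2"
    using assms(1) card_le_Suc0_iff_eq[of "UNIV :: 'a set"] by fastforce
  define R1 where "R1 = redirect a2 id P0"
  define R2 where "R2 = redirect a2 (\<lambda>_. undefined) P0"
  obtain d1 where "d1 > 0" "\<And>e. 0 \<le> e \<Longrightarrow> e \<le> d1 \<Longrightarrow> P0 + e *\<^sub>R (R1 - P0) \<in> U"
    using segment_start_in_open[OF U(1,2)] by blast
  moreover obtain d2 where "d2 > 0" "\<And>e. 0 \<le> e \<Longrightarrow> e \<le> d2 \<Longrightarrow> P0 + e *\<^sub>R (R2 - P0) \<in> U"
    using segment_start_in_open[OF U(1,2)] by blast
  moreover define e where "e = min 1 (min d1 d2)"
  moreover define P1 where "P1 = P0 + e *\<^sub>R (R1 - P0)"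
  moreover define P2 where "P2 = P0 + e *\<^sub>R (R2 - P0)"
  ultimately have "0 < e" "e \<le> 1" and P1: "P1 \<in> N \<inter> stoch_mats" and P2: "P2 \<in> N \<inter> stoch_mats"
    using U(3) assms(4) by (auto simp: R1_def R2_def stoch_mats_segment redirect_in_stoch_mats)
  have inter: "col_span (E_mat - \<gamma> *\<^sub>R P1) \<inter> col_span (E_mat - \<gamma> *\<^sub>R P2) = span {vec 1}"
    unfolding P1_def P2_def R1_def R2_def
    by (rule col_span_inter_redirect_perturbations[OF assms(4) \<open>a1 \<noteq> a2\<close> \<open>0 < e\<close> \<open>e \<le> 1\<close> assms(2,3)])
  have "rank (hcat (E_mat - \<gamma> *\<^sub>R P1) (E_mat - \<gamma> *\<^sub>R P2)) + 1 = CARD('s) + CARD('s)"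
    using rank_hcat[of "E_mat - \<gamma> *\<^sub>R P1" "E_mat - \<gamma> *\<^sub>R P2"] inter P1 P2 assms(2,3)
    by (simp add: dim_col_span_E_mat_minus_mult dim_span dim_insert)
  then show ?thesis
    using P1 P2 inter by (intro exI[of _ P1] exI[of _ P2]) simp
qed

end
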